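(* Let $q$ be an odd prime power, $c\in\mathbb{F}_q^*$, and $f(X)=X(X^{q-1}-c)^{q+1}$ viewed as a map $\mathbb{F}_{q^2}\to\mathbb{F}_{q^2}$. Let $\mathrm{Fix}(f)=\{\alpha\in\mathbb{F}_{q^2}: f(\alpha)=\alpha\}$. Then \[ |\mathrm{Fix}(f)|=\begin{cases} q & \text{if } c^2=4,\\ 2q-1 & \text{if } c^2\neq 4 \text{ and } \chi_2\!\left(\frac{c+2}{c-2}\right)=-1,\\ 1 & \text{if } c^2\neq 4 \text{ and } \chi_2\!\left(\frac{c+2}{c-2}\right)=1.\end{cases} \]
   Context: $\chi_2$ is the quadratic character of $\mathbb{F}_q$: $\chi_2(\alpha)=1$ if $\alpha$ is a nonzero square in $\mathbb{F}_q$, $-1$ if $\alpha$ is a non-square, and $0$ if $\alpha=0$. *)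

theory Defs
  imports "HOL-Computational_Algebra.Primes" "HOL-Library.Cardinality"
begin

text \<open>The subfield F_q of a finite field F of order q^2 is the set of roots of X^q - X.\<close>
definition Fq :: "nat \<Rightarrow> 'a::field set" where
  "Fq q = {x. x ^ q = x}"

definition chi2 :: "nat \<Rightarrow> 'a::field \<Rightarrow> int" where
  "chi2 q a = (if a = 0 then 0 else if (\<exists>y\<in>Fq q. y ^ 2 = a) then 1 else -1)"

end

theory Submission
  imports Defs "HOL-Computational_Algebra.Polynomial"
begin

text \<open>
  For \<open>x \<noteq> 0\<close> put \<open>u = x^(q-1)\<close>. Then \<open>u\<close> has norm \<open>u^(q+1) = 1\<close>, so \<open>u^q = 1/u\<close>, and
  \<open>f x = x\<close> becomes \<open>(1/u - c) (u - c) = 1\<close>, i.e. \<open>u^2 - c u + 1 = 0\<close>. Every norm-one \<open>u\<close> has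
  exactly \<open>q - 1\<close> preimages under \<open>x \<mapsto> x^(q-1)\<close>, so the number of fixed points is \<open>1 + (q - 1) r\<close>,
  where \<open>r\<close> counts the norm-one roots of \<open>X^2 - c X + 1\<close>. If the discriminant \<open>c^2 - 4\<close> is a
  square in \<open>F_q\<close>, the roots lie in \<open>F_q\<close>, where the norm is \<open>u^2\<close>, and norm one forces \<open>c = \<plusminus>2\<close>.
  Otherwise the two roots are Frobenius conjugates, so the norm of each is their product \<open>1\<close>.
  Finally \<open>c^2 - 4\<close> and \<open>(c + 2)/(c - 2)\<close> differ by the square factor \<open>(c - 2)^2\<close>.
\<close>

lemma of_nat_card_eq_0: "of_nat CARD('a) = (0 :: 'a :: {ring_1,finite})"
proof -
  have "(\<Sum>x\<in>UNIV. x + 1) = (\<Sum>x\<in>UNIV. x :: 'a)"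
    by (rule sum.reindex_bij_witness[of _ "\<lambda>x. x - 1" "\<lambda>x. x + 1"]) auto
  then show ?thesis
    by (simp add: sum.distrib)
qed

lemma CHAR_eq_if_card_eq_prime_power:
  assumes "prime p" "n > 0" "CARD('a :: {idom,finite}) = p ^ n"
  shows "CHAR('a) = p"
proof -
  have "prime CHAR('a)"
    using prime_CHAR_semidom finite_imp_CHAR_pos[OF finite] by blast
  moreover have "CHAR('a) dvd p ^ n"
    using of_nat_card_eq_0[where 'a = 'a] unfolding assms(3) of_nat_eq_0_iff_char_dvd .
  ultimately show ?thesis
    using assms(1) prime_dvd_power primes_dvd_imp_eq by blast
qed

lemma two_neq_zero_if_odd_card:
  assumes "odd CARD('a :: {comm_ring_1,finite})"
  shows "(2 :: 'a) \<noteq> 0"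
proof
  assume "(2 :: 'a) = 0"
  then have "CHAR('a) dvd 2"
    using of_nat_eq_0_iff_char_dvd[where 'a = 'a, of 2] by simp
  then have "CHAR('a) = 2"
    using CHAR_not_1[where 'a = 'a] two_is_prime_nat prime_nat_iff by auto
  then show False
    using assms of_nat_card_eq_0[where 'a = 'a] by (simp add: of_nat_eq_0_iff_char_dvd)
qed

lemma power_card_minus_1_eq_1:
  fixes x :: "'a :: {field,finite}"
  assumes "x \<noteq> 0"
  shows "x ^ (CARD('a) - 1) = 1"
proof -
  define N where "N = UNIV - {0 :: 'a}"
  have card_N: "card N = CARD('a) - 1"
    by (simp add: N_def card_Diff_singleton)
  have "(\<Prod>y\<in>N. x * y) = \<Prod>N"
    by (rule prod.reindex_bij_witness[of _ "\<lambda>y. y / x" "\<lambda>y. x * y"]) (use assms in \<open>auto simp: N_def\<close>)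
  moreover have "(\<Prod>y\<in>N. x * y) = x ^ card N * \<Prod>N"
    by (simp add: prod.distrib)
  moreover have "\<Prod>N \<noteq> 0"
    by (simp add: N_def)
  ultimately show ?thesis
    by (simp add: card_N)
qed

lemma card_power_eq_le:
  fixes a :: "'a :: idom"
  assumes "n > 0"
  shows "card {x. x ^ n = a} \<le> n"
proof -
  define p where "p = monom 1 n + [:-a:]"
  have deg: "degree p = n"
    unfolding p_def using assms by (subst degree_add_eq_left) (auto simp: degree_monom_eq)
  have "{x. x ^ n = a} = {x. poly p x = 0}"
    by (auto simp: p_def poly_monom)
  then show ?thesis
    using card_poly_roots_bound[of p] deg assms by fastforce
qed

lemma card_power_eq_if_power_eq_1:
  fixes u :: "'a :: {field,finite}"
  assumes k: "k > 0" and m: "m > 0" and km: "k * m = CARD('a) - 1" and u: "u ^ m = 1"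
  shows "card {x. x ^ k = u} = k"
proof -
  define M where "M = {v :: 'a. v ^ m = 1}"
  define fiber where "fiber v = {x :: 'a. x ^ k = v}" for v
  have partition: "UNIV - {0} = (\<Union>v\<in>M. fiber v)"
  proof (intro equalityI subsetI)
    fix x :: 'a
    assume "x \<in> UNIV - {0}"
    then have "(x ^ k) ^ m = 1"
      using power_card_minus_1_eq_1[of x] km by (simp flip: power_mult)
    then show "x \<in> (\<Union>v\<in>M. fiber v)"
      by (auto simp: M_def fiber_def)
  qed (use k m in \<open>auto simp: M_def fiber_def zero_power\<close>)
  have "(\<Sum>v\<in>M. card (fiber v)) = card (\<Union>v\<in>M. fiber v)"
    by (rule card_UN_disjoint[symmetric]) (auto simp: fiber_def)
  also have "\<dots> = k * m"
    unfolding partition[symmetric] km by (simp add: card_Diff_singleton)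
  finally have sum_fibers: "(\<Sum>v\<in>M. card (fiber v)) = k * m" .
  have card_M: "card M \<le> m"
    unfolding M_def using card_power_eq_le[OF m] .
  have fiber_le: "card (fiber v) \<le> k" for v
    unfolding fiber_def using card_power_eq_le[OF k] .
  have "k \<le> card (fiber u)"
  proof (rule ccontr)
    assume "\<not> k \<le> card (fiber u)"
    then have "(\<Sum>v\<in>M. card (fiber v)) < (\<Sum>v\<in>M. k)"
      by (intro sum_strict_mono_ex1) (use fiber_le u in \<open>auto simp: M_def\<close>)
    also have "\<dots> \<le> k * m"
      using card_M by simp
    finally show False
      using sum_fibers by simp
  qed
  then show ?thesis
    using fiber_le[of u] by (simp add: fiber_def)
qed

lemma power_diff_if_power_add:
  fixes x y :: "'a :: comm_ring_1"
  assumes "\<And>x y :: 'a. (x + y) ^ n = x ^ n + y ^ n"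
  shows "(x - y) ^ n = x ^ n - y ^ n"
  using assms[of "x - y" y] by (simp add: eq_diff_eq)

lemma ex_Fq_square_mult_iff:
  fixes a z :: "'a :: field"
  assumes "z \<in> Fq q" "z \<noteq> 0"
  shows "(\<exists>y\<in>Fq q. y ^ 2 = a * z ^ 2) \<longleftrightarrow> (\<exists>y\<in>Fq q. y ^ 2 = a)"
proof
  assume "\<exists>y\<in>Fq q. y ^ 2 = a * z ^ 2"
  then obtain y where "y ^ q = y" "y ^ 2 = a * z ^ 2"
    by (auto simp: Fq_def)
  then have "(y / z) ^ q = y / z" "(y / z) ^ 2 = a"
    using assms by (auto simp: Fq_def power_divide)
  then show "\<exists>y\<in>Fq q. y ^ 2 = a"
    by (auto simp: Fq_def)
next
  assume "\<exists>y\<in>Fq q. y ^ 2 = a"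
  then obtain y where "y ^ q = y" "y ^ 2 = a"
    by (auto simp: Fq_def)
  then have "(y * z) ^ q = y * z" "(y * z) ^ 2 = a * z ^ 2"
    using assms by (auto simp: Fq_def power_mult_distrib)
  then show "\<exists>y\<in>Fq q. y ^ 2 = a * z ^ 2"
    by (auto simp: Fq_def)
qed

lemma ex_Fq_square_iff:
  fixes y :: "'a :: field"
  assumes "odd q" "y ^ 2 = d"
  shows "(\<exists>z\<in>Fq q. z ^ 2 = d) \<longleftrightarrow> y \<in> Fq q"
proof -
  have "z ^ 2 = d \<longleftrightarrow> z = y \<or> z = - y" for z
    using assms(2) by (auto simp: power2_eq_iff)
  moreover have "- y \<in> Fq q \<longleftrightarrow> y \<in> Fq q"
    using assms(1) by (simp add: Fq_def)
  ultimately show ?thesis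
    by auto
qed

lemma ex_sqrt_if_in_Fq:
  fixes d :: "'a :: {field,finite}"
  assumes card: "CARD('a) = q ^ 2" and "odd q" "1 < q" and d: "d \<in> Fq q"
  shows "\<exists>y. y ^ 2 = d"
proof (cases "d = 0")
  case False
  define m where "m = (q - 1) * ((q + 1) div 2)"
  have "2 * m = (q - 1) * (2 * ((q + 1) div 2))"
    by (simp only: m_def mult.left_commute)
  also have "2 * ((q + 1) div 2) = q + 1"
    using \<open>odd q\<close> by simp
  also have "(q - 1) * (q + 1) = CARD('a) - 1"
    using card by (simp add: power2_eq_square algebra_simps)
  finally have two_m: "2 * m = CARD('a) - 1" .
  have "d ^ (q - 1) * d = d"
    using d \<open>1 < q\<close> by (simp add: Fq_def flip: power_Suc2)
  then have "d ^ m = 1"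
    using False by (simp add: m_def power_mult)
  then have "card {y. y ^ 2 = d} = 2"
    using two_m \<open>odd q\<close> \<open>1 < q\<close>
    by (intro card_power_eq_if_power_eq_1[of 2 m]) (auto simp: m_def)
  then have "{y. y ^ 2 = d} \<noteq> {}"
    by (intro notI) simp
  then show ?thesis
    by blast
qed simp

text \<open>\<open>u^(q+1)\<close> is the norm of \<open>u\<close> from \<open>F_(q^2)\<close> down to \<open>F_q\<close>.\<close>
definition norm_one_roots :: "nat \<Rightarrow> 'a :: field \<Rightarrow> 'a set" where
  "norm_one_roots q c = {u. u ^ (q + 1) = 1 \<and> u ^ 2 - c * u + 1 = 0}"

lemma fixed_point_iff_mem_norm_one_roots:
  fixes x c :: "'a :: {field,finite}"
  assumes add: "\<And>x y :: 'a. (x + y) ^ q = x ^ q + y ^ q" and card: "CARD('a) = q ^ 2"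
    and c: "c \<in> Fq q" "c \<noteq> 0" and x: "x \<noteq> 0"
  shows "x * (x ^ (q - 1) - c) ^ (q + 1) = x \<longleftrightarrow> x ^ (q - 1) \<in> norm_one_roots q c"
proof -
  define u where "u = x ^ (q - 1)"
  have "(q - 1) * (q + 1) = CARD('a) - 1"
    using card by (cases q) (simp_all add: power2_eq_square)
  then have norm_u: "u ^ (q + 1) = 1"
    using power_card_minus_1_eq_1[OF x] by (metis u_def power_mult)
  then have "u \<noteq> 0"
    by auto
  have "u ^ q = 1 / u"
    using norm_u \<open>u \<noteq> 0\<close> by (simp add: field_simps flip: power_Suc2)
  then have "(u - c) ^ q = 1 / u - c"
    using power_diff_if_power_add[OF add, of u c] c by (simp add: Fq_def)
  then have "(u - c) ^ (q + 1) = (1 / u - c) * (u - c)"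
    by (simp flip: power_Suc2)
  also have "\<dots> = 1 - c * (u ^ 2 - c * u + 1) / u"
    using \<open>u \<noteq> 0\<close> by (simp add: field_simps power2_eq_square)
  finally have "(u - c) ^ (q + 1) = 1 \<longleftrightarrow> u ^ 2 - c * u + 1 = 0"
    using c \<open>u \<noteq> 0\<close> by simp
  then show ?thesis
    using x norm_u by (simp add: u_def norm_one_roots_def)
qed

lemma card_fixed_points:
  fixes c :: "'a :: {field,finite}"
  assumes add: "\<And>x y :: 'a. (x + y) ^ q = x ^ q + y ^ q" and card: "CARD('a) = q ^ 2"
    and "1 < q" and c: "c \<in> Fq q" "c \<noteq> 0"
  shows "card {x. x * (x ^ (q - 1) - c) ^ (q + 1) = x} = Suc (card (norm_one_roots q c) * (q - 1))"
proof -
  define fiber where "fiber u = {x :: 'a. x ^ (q - 1) = u}" for u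
  have "0 \<notin> norm_one_roots q c"
    by (simp add: norm_one_roots_def)
  then have fixed_points: "{x. x * (x ^ (q - 1) - c) ^ (q + 1) = x} =
      insert 0 (\<Union>u\<in>norm_one_roots q c. fiber u)" and "0 \<notin> (\<Union>u\<in>norm_one_roots q c. fiber u)"
    using fixed_point_iff_mem_norm_one_roots[OF add card c] \<open>1 < q\<close>
    by (auto simp: fiber_def zero_power)
  have "card (fiber u) = q - 1" if "u \<in> norm_one_roots q c" for u
    unfolding fiber_def using that card \<open>1 < q\<close>
    by (intro card_power_eq_if_power_eq_1[of _ "q + 1"])
       (auto simp: norm_one_roots_def power2_eq_square algebra_simps)
  moreover have "card (\<Union>u\<in>norm_one_roots q c. fiber u) = (\<Sum>u\<in>norm_one_roots q c. card (fiber u))"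
    by (rule card_UN_disjoint) (auto simp: fiber_def)
  ultimately show ?thesis
    unfolding fixed_points using \<open>0 \<notin> (\<Union>u\<in>norm_one_roots q c. fiber u)\<close> by simp
qed

lemma quadratic_eq_0_iff:
  fixes c y u :: "'a :: field"
  assumes two: "(2 :: 'a) \<noteq> 0" and y: "y ^ 2 = c ^ 2 - 4"
  shows "u ^ 2 - c * u + 1 = 0 \<longleftrightarrow> u = (c + y) / 2 \<or> u = (c - y) / 2"
proof -
  have "(4 :: 'a) \<noteq> 0"
    using two mult_eq_0_iff[of "2 :: 'a" 2] by simp
  then have "u ^ 2 - c * u + 1 = 0 \<longleftrightarrow> 4 * (u ^ 2 - c * u + 1) = 0"
    by (simp only: mult_eq_0_iff simp_thms)
  also have "4 * (u ^ 2 - c * u + 1) = (2 * u - c) ^ 2 - y ^ 2"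
    using y by (simp add: algebra_simps power2_eq_square)
  also have "\<dots> = 0 \<longleftrightarrow> 2 * u - c = y \<or> 2 * u - c = - y"
    by (simp add: power2_eq_iff)
  also have "\<dots> \<longleftrightarrow> u = (c + y) / 2 \<or> u = (c - y) / 2"
    using two by (auto simp: field_simps)
  finally show ?thesis .
qed

lemma power_half_add_if_power_add:
  fixes c s :: "'a :: field"
  assumes add: "\<And>x y :: 'a. (x + y) ^ q = x ^ q + y ^ q" and "c \<in> Fq q"
  shows "((c + s) / 2) ^ q = (c + s ^ q) / 2"
proof -
  have "(2 :: 'a) ^ q = 2"
    using add[of 1 1] by simp
  then show ?thesis
    using \<open>c \<in> Fq q\<close> by (simp add: Fq_def power_divide add)
qed

lemma norm_one_roots_eq_singleton:
  fixes c :: "'a :: field"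
  assumes two: "(2 :: 'a) \<noteq> 0" and "odd q" and c: "c ^ 2 = 4"
  shows "norm_one_roots q c = {c / 2}"
proof -
  have "(4 :: 'a) \<noteq> 0"
    using two mult_eq_0_iff[of "2 :: 'a" 2] by simp
  then have "(c / 2) ^ 2 = 1"
    using c by (simp add: power_divide)
  moreover obtain r where "q + 1 = 2 * r"
    using \<open>odd q\<close> by (metis odd_even_add odd_one evenE)
  ultimately have "(c / 2) ^ (q + 1) = 1"
    by (simp add: power_mult)
  moreover have "u ^ 2 - c * u + 1 = 0 \<longleftrightarrow> u = c / 2" for u
    using quadratic_eq_0_iff[OF two, of 0 c u] c by simp
  ultimately show ?thesis
    unfolding norm_one_roots_def by blast
qed

lemma norm_one_roots_eq_empty:
  fixes c y :: "'a :: field"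
  assumes add: "\<And>x y :: 'a. (x + y) ^ q = x ^ q + y ^ q" and "odd q" and two: "(2 :: 'a) \<noteq> 0"
    and c: "c \<in> Fq q" "c ^ 2 \<noteq> 4" and y: "y \<in> Fq q" "y ^ 2 = c ^ 2 - 4"
  shows "norm_one_roots q c = {}"
proof (rule ccontr)
  assume "norm_one_roots q c \<noteq> {}"
  then obtain u where u: "u ^ (q + 1) = 1" "u ^ 2 - c * u + 1 = 0"
    by (auto simp: norm_one_roots_def)
  have "u = (c + y) / 2 \<or> u = (c + - y) / 2"
    using quadratic_eq_0_iff[OF two y(2), of u] u(2) by simp
  moreover have "(- y) ^ q = - y"
    using y(1) \<open>odd q\<close> by (simp add: Fq_def)
  ultimately have "u ^ q = u"
    using power_half_add_if_power_add[OF add c(1)] y(1) by (auto simp only: Fq_def mem_Collect_eq)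
  then have "u * u = 1"
    using u(1) by (simp flip: power_Suc2)
  then have "c * u = 2"
    using u(2) by (simp add: power2_eq_square algebra_simps)
  have "c ^ 2 = (c * u) ^ 2"
    using \<open>u * u = 1\<close> by (simp add: power2_eq_square algebra_simps)
  with \<open>c * u = 2\<close> c(2) show False
    by simp
qed

lemma card_norm_one_roots_eq_2:
  fixes c y :: "'a :: field"
  assumes add: "\<And>x y :: 'a. (x + y) ^ q = x ^ q + y ^ q" and "odd q" and two: "(2 :: 'a) \<noteq> 0"
    and c: "c \<in> Fq q" and y: "y ^ 2 = c ^ 2 - 4" "y ^ q = - y" "y \<noteq> 0"
  shows "card (norm_one_roots q c) = 2"
proof -
  have "(4 :: 'a) \<noteq> 0"
    using two mult_eq_0_iff[of "2 :: 'a" 2] by simp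
  have norm: "((c + s) / 2) ^ (q + 1) = 1" if "s ^ q = - s" "s ^ 2 = y ^ 2" for s
  proof -
    have "((c + s) / 2) ^ (q + 1) = (c + - s) / 2 * ((c + s) / 2)"
      using power_half_add_if_power_add[OF add c, of s] that(1) by (simp only: power_add power_one_right)
    also have "\<dots> = (c ^ 2 - s ^ 2) / 4"
      by (simp add: field_simps power2_eq_square)
    finally show ?thesis
      using that(2) y(1) \<open>4 \<noteq> 0\<close> by simp
  qed
  have "((c - y) / 2) ^ (q + 1) = 1"
    using norm[of "- y"] y(2) \<open>odd q\<close> by simp
  then have "norm_one_roots q c = {(c + y) / 2, (c - y) / 2}"
    using quadratic_eq_0_iff[OF two y(1)] norm[of y] y(2)
    unfolding norm_one_roots_def by blast
  moreover have "(c + y) / 2 \<noteq> (c - y) / 2"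
    using two y(3) \<open>4 \<noteq> 0\<close> by (simp add: field_simps)
  ultimately show ?thesis
    by simp
qed

lemma card_norm_one_roots:
  fixes c :: "'a :: {field,finite}"
  assumes add: "\<And>x y :: 'a. (x + y) ^ q = x ^ q + y ^ q" and card: "CARD('a) = q ^ 2"
    and "odd q" "1 < q" and c: "c \<in> Fq q"
  shows "card (norm_one_roots q c) =
    (if c ^ 2 = 4 then 1 else if chi2 q ((c + 2) / (c - 2)) = -1 then 2 else 0)"
proof -
  have two: "(2 :: 'a) \<noteq> 0"
    using two_neq_zero_if_odd_card[where 'a = 'a] card \<open>odd q\<close> by simp
  show ?thesis
  proof (cases "c ^ 2 = 4")
    case True
    then show ?thesis
      using norm_one_roots_eq_singleton[OF two \<open>odd q\<close> True] by simp
  next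
    case False
    define d where "d = c ^ 2 - 4"
    have "c - 2 \<noteq> 0" "c + 2 \<noteq> 0"
      using False by (auto simp: power2_eq_square algebra_simps add_eq_0_iff2)
    have "(2 :: 'a) ^ q = 2"
      using add[of 1 1] by simp
    then have "c - 2 \<in> Fq q" "c + 2 \<in> Fq q"
      using c power_diff_if_power_add[OF add, of c 2] add[of c 2] by (simp_all add: Fq_def)
    have d_factor: "d = (c + 2) * (c - 2)"
      by (simp add: d_def power2_eq_square algebra_simps)
    have d_eq: "d = (c + 2) / (c - 2) * (c - 2) ^ 2"
      using \<open>c - 2 \<noteq> 0\<close> by (simp add: d_factor power2_eq_square)
    have "d \<in> Fq q" "d \<noteq> 0"
      using \<open>c - 2 \<in> Fq q\<close> \<open>c + 2 \<in> Fq q\<close> \<open>c - 2 \<noteq> 0\<close> \<open>c + 2 \<noteq> 0\<close>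
      by (simp_all add: d_factor Fq_def power_mult_distrib)
    then obtain y where y: "y ^ 2 = d"
      using ex_sqrt_if_in_Fq[OF card \<open>odd q\<close> \<open>1 < q\<close>] by blast
    have "(\<exists>z\<in>Fq q. z ^ 2 = (c + 2) / (c - 2)) \<longleftrightarrow> y \<in> Fq q"
      using ex_Fq_square_mult_iff[OF \<open>c - 2 \<in> Fq q\<close> \<open>c - 2 \<noteq> 0\<close>] ex_Fq_square_iff[OF \<open>odd q\<close> y]
      unfolding d_eq by (simp only:)
    then have chi: "chi2 q ((c + 2) / (c - 2)) = (if y \<in> Fq q then 1 else -1)"
      using \<open>c - 2 \<noteq> 0\<close> \<open>c + 2 \<noteq> 0\<close> by (simp add: chi2_def)
    have "(y ^ q) ^ 2 = (y ^ 2) ^ q"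
      by (simp flip: power_mult add: mult.commute)
    then have "(y ^ q) ^ 2 = y ^ 2"
      using y \<open>d \<in> Fq q\<close> by (simp add: Fq_def)
    then have "y \<in> Fq q \<or> y ^ q = - y"
      by (simp add: Fq_def power2_eq_iff)
    moreover have "y \<noteq> 0"
      using y \<open>d \<noteq> 0\<close> by auto
    ultimately show ?thesis
      using norm_one_roots_eq_empty[OF add \<open>odd q\<close> two c False] card_norm_one_roots_eq_2[OF add \<open>odd q\<close> two c]
        chi False y by (auto simp: d_def)
  qed
qed

theorem mainTheorem2:
  fixes q :: nat and c :: "'a::{field,finite}" and f :: "'a \<Rightarrow> 'a"
  assumes "\<exists>p k. prime p \<and> k > 0 \<and> q = p ^ k"
    and "odd q"
    and "CARD('a) = q ^ 2"
    and "c \<in> Fq q" and "c \<noteq> 0"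
    and "\<And>x. f x = x * (x ^ (q - 1) - c) ^ (q + 1)"
  shows "card {\<alpha>. f \<alpha> = \<alpha>} =
    (if c ^ 2 = 4 then q
     else if chi2 q ((c + 2) / (c - 2)) = -1 then 2 * q - 1
     else 1)"
proof -
  obtain p k where p: "prime p" and k: "k > 0" and q: "q = p ^ k"
    using assms(1) by blast
  then have "CHAR('a) = p"
    using CHAR_eq_if_card_eq_prime_power[of p "k * 2"] assms(3) by (simp add: power_mult)
  then have add: "(x + y) ^ q = x ^ q + y ^ q" for x y :: 'a
    using freshmans_dream'[of q k x y] p q by simp
  have "1 < q"
    using q k one_less_power prime_gt_1_nat[OF p] by blast
  have "{\<alpha>. f \<alpha> = \<alpha>} = {x. x * (x ^ (q - 1) - c) ^ (q + 1) = x}"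
    using assms(6) by simp
  then have "card {\<alpha>. f \<alpha> = \<alpha>} = Suc (card (norm_one_roots q c) * (q - 1))"
    using card_fixed_points[OF add assms(3) \<open>1 < q\<close> assms(4,5)] by simp
  then show ?thesis
    using card_norm_one_roots[OF add assms(3) assms(2) \<open>1 < q\<close> assms(4)] \<open>1 < q\<close> by auto
qed

end
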